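(* Let $\alpha\ge0$ and $n\ge2$ with $n\ge\alpha$, and let $K$ be the event that $\mathscr{G}(n,\alpha/n)$ is connected. Then \[ P_{n,\alpha}(K)\le\Bigl(1-\bigl(1-\tfrac{\alpha}{n}\bigr)^{n-1}\Bigr)^{n-1}. \]
   Context: $\mathscr{G}(n,p)$ is the random graph on vertex set $\{1,\dots,n\}$ in which each of the $\binom n2$ unordered pairs is an edge independently with probability $p$; here $p=\alpha/n$, and $P_{n,\alpha}$ is the corresponding probability measure. *)

theory Defs
  imports Complex_Main
begin

definition gnp_pairs :: "nat \<Rightarrow> nat set set" where
  "gnp_pairs n = {e. \<exists>i j. e = {i, j} \<and> i \<in> {1..n} \<and> j \<in> {1..n} \<and> i \<noteq> j}"

definition adj_rel :: "nat set set \<Rightarrow> (nat \<times> nat) set" where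
  "adj_rel E = {(u, v). {u, v} \<in> E}"

definition graph_connected :: "nat \<Rightarrow> nat set set \<Rightarrow> bool" where
  "graph_connected n E \<longleftrightarrow> (\<forall>u\<in>{1..n}. \<forall>v\<in>{1..n}. (u, v) \<in> (adj_rel E)\<^sup>*)"

text \<open>Probability of a graph property Q in G(n,p): each of the (n choose 2) possible edges is
  present independently with probability p; sum over all edge sets E of the probability
  p^|E| (1-p)^(N-|E|) of E.\<close>
definition gnp_prob :: "nat \<Rightarrow> real \<Rightarrow> (nat set set \<Rightarrow> bool) \<Rightarrow> real" where
  "gnp_prob n p Q = (\<Sum>E\<in>{E. E \<subseteq> gnp_pairs n \<and> Q E}.
      p ^ card E * (1 - p) ^ (card (gnp_pairs n) - card E))"

end

theory Submission
  imports Defs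
begin

text \<open>Explore the graph from vertex 1. For disjoint vertex sets A and U, let F(A, U) be the
  probability that every vertex of U is joined to A by a path using only the potential edges inside
  A \<union> U that meet U. Remove a vertex w of A and condition on its set K of neighbours in U: every
  vertex of U - K must then be reached from (A - {w}) \<union> K by a path whose edges avoid w and meet
  U - K, and these edges are independent of the edges at w. Hence
  F(A, U) \<le> sum over K \<subseteq> U of p^|K| (1-p)^|U-K| F((A - {w}) \<union> K, U - K),
  and induction on |A| + |U| together with the binomial theorem gives
  F(A, U) \<le> (1 - (1-p)^(|A|+|U|-1))^|U|. A connected graph on {1..n} lies in the event of
  F({1}, {2..n}).\<close>

definition bernoulli_weight :: "real \<Rightarrow> 'a set \<Rightarrow> 'a set \<Rightarrow> real" where
  "bernoulli_weight p P E = p ^ card E * (1 - p) ^ card (P - E)"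

definition bernoulli_prob :: "real \<Rightarrow> 'a set \<Rightarrow> ('a set \<Rightarrow> bool) \<Rightarrow> real" where
  "bernoulli_prob p P Q = (\<Sum>E | E \<subseteq> P \<and> Q E. bernoulli_weight p P E)"

lemma bernoulli_weight_nonneg: "0 \<le> p \<Longrightarrow> p \<le> 1 \<Longrightarrow> 0 \<le> bernoulli_weight p P E"
  by (simp add: bernoulli_weight_def)

lemma bernoulli_prob_eq_sum_Pow:
  assumes "finite P"
  shows "bernoulli_prob p P Q = (\<Sum>E\<in>Pow P. if Q E then bernoulli_weight p P E else 0)"
proof -
  have "{E. E \<subseteq> P \<and> Q E} = {E \<in> Pow P. Q E}" by auto
  then show ?thesis
    unfolding bernoulli_prob_def by (simp only:) (intro sum.inter_filter, simp add: assms)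
qed

lemma bernoulli_prob_cong:
  "(\<And>E. E \<subseteq> P \<Longrightarrow> Q E \<longleftrightarrow> Q' E) \<Longrightarrow>
    bernoulli_prob p P Q = bernoulli_prob p P Q'"
  unfolding bernoulli_prob_def by (rule sum.cong) auto

lemma bernoulli_prob_mono:
  assumes "finite P" "0 \<le> p" "p \<le> 1" "\<And>E. E \<subseteq> P \<Longrightarrow> Q E \<Longrightarrow> Q' E"
  shows "bernoulli_prob p P Q \<le> bernoulli_prob p P Q'"
  unfolding bernoulli_prob_eq_sum_Pow[OF assms(1)]
  using assms by (intro sum_mono) (auto simp: bernoulli_weight_nonneg)

lemma sum_bernoulli_weight_power:
  assumes "finite P"
  shows "(\<Sum>E\<in>Pow P. bernoulli_weight p P E * c ^ card (P - E)) = (p + (1 - p) * c) ^ card P"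
proof -
  have "(\<Prod>x\<in>P. p + (1 - p) * c) = (\<Sum>E\<in>Pow P. (\<Prod>x\<in>E. p) * (\<Prod>x\<in>P - E. (1 - p) * c))"
    by (rule prod_add[OF assms])
  then show ?thesis by (simp add: bernoulli_weight_def power_mult_distrib mult.assoc)
qed

lemma bernoulli_prob_True: "finite P \<Longrightarrow> bernoulli_prob p P (\<lambda>_. True) = 1"
  using sum_bernoulli_weight_power[of P p 1] by (simp add: bernoulli_prob_eq_sum_Pow)

lemma sum_Pow_Un:
  assumes "P1 \<inter> P2 = {}"
  shows "(\<Sum>E\<in>Pow (P1 \<union> P2). h E) = (\<Sum>E1\<in>Pow P1. \<Sum>E2\<in>Pow P2. h (E1 \<union> E2))"
proof -
  have "bij_betw (\<lambda>(E1, E2). E1 \<union> E2) (Pow P1 \<times> Pow P2) (Pow (P1 \<union> P2))"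
    by (rule bij_betw_byWitness[where f' = "\<lambda>E. (E \<inter> P1, E \<inter> P2)"]) (use assms in auto)
  from sum.reindex_bij_betw[OF this, of h] show ?thesis
    by (simp add: sum.cartesian_product case_prod_unfold)
qed

lemma bernoulli_weight_Un:
  assumes "finite P1" "finite P2" "P1 \<inter> P2 = {}" "E1 \<subseteq> P1" "E2 \<subseteq> P2"
  shows "bernoulli_weight p (P1 \<union> P2) (E1 \<union> E2) = bernoulli_weight p P1 E1 * bernoulli_weight p P2 E2"
proof -
  have "finite E1" "finite E2" using assms finite_subset by blast+
  then have "card (E1 \<union> E2) = card E1 + card E2"
    using assms by (intro card_Un_disjoint) auto
  moreover have "card (P1 \<union> P2 - (E1 \<union> E2)) = card (P1 - E1) + card (P2 - E2)"
    using assms by (subst card_Un_disjoint[symmetric]) (auto intro: arg_cong[where f = card])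
  ultimately show ?thesis by (simp add: bernoulli_weight_def power_add)
qed

lemma bernoulli_prob_Un:
  assumes "finite P1" "finite P2" "P1 \<inter> P2 = {}"
  shows "bernoulli_prob p (P1 \<union> P2) Q =
    (\<Sum>E1\<in>Pow P1. bernoulli_weight p P1 E1 * bernoulli_prob p P2 (\<lambda>E2. Q (E1 \<union> E2)))"
proof -
  have "bernoulli_prob p (P1 \<union> P2) Q =
      (\<Sum>E1\<in>Pow P1. \<Sum>E2\<in>Pow P2.
        if Q (E1 \<union> E2) then bernoulli_weight p (P1 \<union> P2) (E1 \<union> E2) else 0)"
    using assms by (simp add: bernoulli_prob_eq_sum_Pow sum_Pow_Un)
  also have "\<dots> = (\<Sum>E1\<in>Pow P1. bernoulli_weight p P1 E1 *
      (\<Sum>E2\<in>Pow P2. if Q (E1 \<union> E2) then bernoulli_weight p P2 E2 else 0))"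
    using assms by (auto simp: sum_distrib_left bernoulli_weight_Un intro!: sum.cong)
  finally show ?thesis using assms(2) by (simp add: bernoulli_prob_eq_sum_Pow)
qed

lemma bernoulli_prob_restrict:
  assumes "finite P" "P' \<subseteq> P"
  shows "bernoulli_prob p P (\<lambda>E. Q (E \<inter> P')) = bernoulli_prob p P' Q"
proof -
  have "P = (P - P') \<union> P'" using assms by auto
  moreover have "finite P'" using assms finite_subset by blast
  ultimately have "bernoulli_prob p P (\<lambda>E. Q (E \<inter> P')) = (\<Sum>E1\<in>Pow (P - P').
      bernoulli_weight p (P - P') E1 * bernoulli_prob p P' (\<lambda>E2. Q ((E1 \<union> E2) \<inter> P')))"
    using assms(1) bernoulli_prob_Un[of "P - P'" P'] by auto
  also have "\<dots> = (\<Sum>E1\<in>Pow (P - P'). bernoulli_weight p (P - P') E1) * bernoulli_prob p P' Q"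
  proof -
    have "(E1 \<union> E2) \<inter> P' = E2" if "E1 \<subseteq> P - P'" "E2 \<subseteq> P'" for E1 E2
      using that by auto
    then show ?thesis
      unfolding sum_distrib_right
      by (intro sum.cong refl arg_cong2[where f = "(*)"] bernoulli_prob_cong) auto
  qed
  finally show ?thesis
    using sum_bernoulli_weight_power[of "P - P'" p 1] assms by simp
qed

lemma bernoulli_weight_image:
  assumes "inj_on g P" "E \<subseteq> P"
  shows "bernoulli_weight p (g ` P) (g ` E) = bernoulli_weight p P E"
proof -
  have "g ` P - g ` E = g ` (P - E)" using assms by (auto simp: inj_on_def)
  then show ?thesis
    using assms by (simp add: bernoulli_weight_def card_image inj_on_subset)
qed

lemma sum_Pow_image: "inj_on g P \<Longrightarrow> (\<Sum>F\<in>Pow (g ` P). h F) = (\<Sum>E\<in>Pow P. h (g ` E))"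
  by (metis bij_betw_image_Pow inj_on_imp_bij_betw sum.reindex_bij_betw)

definition pairs_meeting :: "nat set \<Rightarrow> nat set \<Rightarrow> nat set set" where
  "pairs_meeting A U = {{x, y} | x y. x \<noteq> y \<and> x \<in> A \<union> U \<and> y \<in> U}"

definition reachable_from :: "nat set set \<Rightarrow> nat set \<Rightarrow> nat set \<Rightarrow> bool" where
  "reachable_from E A U \<longleftrightarrow> (\<forall>u\<in>U. \<exists>a\<in>A. (a, u) \<in> (adj_rel E)\<^sup>*)"

definition reach_prob :: "real \<Rightarrow> nat set \<Rightarrow> nat set \<Rightarrow> real" where
  "reach_prob p A U = bernoulli_prob p (pairs_meeting A U) (\<lambda>E. reachable_from E A U)"

lemma finite_pairs_meeting: "finite A \<Longrightarrow> finite U \<Longrightarrow> finite (pairs_meeting A U)"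
  by (rule finite_subset[of _ "Pow (A \<union> U)"]) (auto simp: pairs_meeting_def)

lemma pairs_meeting_remove_root:
  assumes "A \<inter> U = {}" "w \<in> A" "K \<subseteq> U"
  shows "pairs_meeting (A - {w} \<union> K) (U - K) \<subseteq> pairs_meeting A U - (\<lambda>u. {w, u}) ` U"
  using assms unfolding pairs_meeting_def by (auto simp: doubleton_eq_iff; blast)

text \<open>Induction along the path: an edge entering U - K leaves from A - {w} \<union> K (the neighbours
  of w in U lie in K) or from U - K, so it belongs to pairs_meeting (A - {w} \<union> K) (U - K).\<close>
lemma rtrancl_adj_rel_remove_root:
  assumes "E \<subseteq> pairs_meeting A U" "\<And>u. u \<in> U \<Longrightarrow> {w, u} \<in> E \<Longrightarrow> u \<in> K"
    and "(a, v) \<in> (adj_rel E)\<^sup>*" "a \<in> A"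
  shows "v \<in> A \<union> K \<or>
    (\<exists>x\<in>A - {w} \<union> K. (x, v) \<in> (adj_rel (E \<inter> pairs_meeting (A - {w} \<union> K) (U - K)))\<^sup>*)"
  using assms(3)
proof (induction rule: rtrancl_induct)
  case base
  then show ?case using assms(4) by simp
next
  case (step v y)
  let ?A' = "A - {w} \<union> K" and ?U' = "U - K"
  let ?R' = "adj_rel (E \<inter> pairs_meeting ?A' ?U')"
  have e: "{v, y} \<in> E" using step.hyps(2) by (simp add: adj_rel_def)
  with assms(1) have vy: "v \<in> A \<union> U" "y \<in> A \<union> U" "v \<noteq> y"
    unfolding pairs_meeting_def by (auto simp: doubleton_eq_iff)
  show ?case
  proof (cases "y \<in> A \<union> K")
    case False
    then have y: "y \<in> ?U'" using vy by auto
    then have "v \<noteq> w" using assms(2) e by auto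
    have edge: "(v, y) \<in> ?R'" if "v \<in> ?A' \<union> ?U'"
      using e y vy(3) that unfolding adj_rel_def pairs_meeting_def by blast
    show ?thesis
    proof (cases "v \<in> A \<union> K")
      case True
      with \<open>v \<noteq> w\<close> edge show ?thesis by blast
    next
      case False
      with step.IH obtain x where "x \<in> ?A'" "(x, v) \<in> ?R'\<^sup>*" by blast
      moreover have "(v, y) \<in> ?R'" using False vy edge by blast
      ultimately show ?thesis by (meson rtrancl.rtrancl_into_rtrancl)
    qed
  qed simp
qed

lemma reachable_from_remove_root:
  assumes AU: "A \<inter> U = {}" and w: "w \<in> A" and K: "K \<subseteq> U"
    and E: "E \<subseteq> pairs_meeting A U - (\<lambda>u. {w, u}) ` U"
    and reach: "reachable_from ((\<lambda>u. {w, u}) ` K \<union> E) A U"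
  shows "reachable_from (E \<inter> pairs_meeting (A - {w} \<union> K) (U - K)) (A - {w} \<union> K) (U - K)"
  unfolding reachable_from_def
proof
  let ?E = "(\<lambda>u. {w, u}) ` K \<union> E" and ?P' = "pairs_meeting (A - {w} \<union> K) (U - K)"
  fix u assume u: "u \<in> U - K"
  with reach obtain a where a: "a \<in> A" "(a, u) \<in> (adj_rel ?E)\<^sup>*"
    unfolding reachable_from_def by blast
  have "(\<lambda>u. {w, u}) ` K \<subseteq> pairs_meeting A U"
    using AU w K unfolding pairs_meeting_def by blast
  then have "?E \<subseteq> pairs_meeting A U" using E by blast
  moreover have "u' \<in> K" if "u' \<in> U" "{w, u'} \<in> ?E" for u'
    using that E by (auto simp: doubleton_eq_iff)
  ultimately have "u \<in> A \<union> K \<or> (\<exists>x\<in>A - {w} \<union> K. (x, u) \<in> (adj_rel (?E \<inter> ?P'))\<^sup>*)"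
    by (rule rtrancl_adj_rel_remove_root[OF _ _ a(2,1)])
  moreover have "?E \<inter> ?P' = E \<inter> ?P'"
    using pairs_meeting_remove_root[OF AU w K] K by blast
  ultimately show "\<exists>x\<in>A - {w} \<union> K. (x, u) \<in> (adj_rel (E \<inter> ?P'))\<^sup>*"
    using u AU by auto
qed

lemma reach_prob_remove_root:
  assumes p: "0 \<le> p" "p \<le> 1" and fin: "finite A" "finite U"
    and AU: "A \<inter> U = {}" and w: "w \<in> A"
  shows "reach_prob p A U \<le>
    (\<Sum>K\<in>Pow U. bernoulli_weight p U K * reach_prob p (A - {w} \<union> K) (U - K))"
proof -
  define g where "g u = {w, u}" for u :: nat
  define R where "R = pairs_meeting A U - g ` U"
  define P' where "P' K = pairs_meeting (A - {w} \<union> K) (U - K)" for K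
  have inj: "inj_on g U"
    using AU w by (auto simp: inj_on_def g_def doubleton_eq_iff)
  have "g ` U \<subseteq> pairs_meeting A U"
    using AU w unfolding g_def pairs_meeting_def by blast
  then have split: "pairs_meeting A U = g ` U \<union> R" "g ` U \<inter> R = {}"
    unfolding R_def by auto
  have finR: "finite R"
    unfolding R_def using finite_pairs_meeting[OF fin] by simp
  have P'R: "P' K \<subseteq> R" if "K \<subseteq> U" for K
    unfolding P'_def R_def g_def using pairs_meeting_remove_root[OF AU w that] .
  have "reach_prob p A U = (\<Sum>F\<in>Pow (g ` U).
      bernoulli_weight p (g ` U) F * bernoulli_prob p R (\<lambda>E. reachable_from (F \<union> E) A U))"
    unfolding reach_prob_def split(1) using fin finR split(2) by (intro bernoulli_prob_Un) auto
  also have "\<dots> = (\<Sum>K\<in>Pow U.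
      bernoulli_weight p U K * bernoulli_prob p R (\<lambda>E. reachable_from (g ` K \<union> E) A U))"
    by (auto simp: sum_Pow_image[OF inj] bernoulli_weight_image[OF inj] intro!: sum.cong)
  also have "\<dots> \<le> (\<Sum>K\<in>Pow U.
      bernoulli_weight p U K *
      bernoulli_prob p R (\<lambda>E. reachable_from (E \<inter> P' K) (A - {w} \<union> K) (U - K)))"
  proof (intro sum_mono mult_left_mono bernoulli_prob_mono bernoulli_weight_nonneg finR p)
    fix K E assume "K \<in> Pow U" "E \<subseteq> R" "reachable_from (g ` K \<union> E) A U"
    then show "reachable_from (E \<inter> P' K) (A - {w} \<union> K) (U - K)"
      unfolding P'_def R_def g_def using reachable_from_remove_root[OF AU w] by blast
  qed
  also have "\<dots> = (\<Sum>K\<in>Pow U. bernoulli_weight p U K * reach_prob p (A - {w} \<union> K) (U - K))"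
    unfolding reach_prob_def P'_def[symmetric]
    by (intro sum.cong refl arg_cong2[where f = "(*)"] bernoulli_prob_restrict finR P'R) simp
  finally show ?thesis .
qed

lemma reach_prob_le:
  assumes "0 \<le> p" "p \<le> 1"
  shows "finite A \<Longrightarrow> finite U \<Longrightarrow> A \<inter> U = {} \<Longrightarrow>
    reach_prob p A U \<le> (1 - (1 - p) ^ (card A + card U - 1)) ^ card U"
proof (induction "card A + card U" arbitrary: A U rule: less_induct)
  case less
  consider "U = {}" | "U \<noteq> {}" "A = {}" | w where "w \<in> A" "U \<noteq> {}" by blast
  then show ?case
  proof cases
    case 1
    then show ?thesis
      using less.prems
      by (simp add: reach_prob_def reachable_from_def bernoulli_prob_True finite_pairs_meeting)
  next
    case 2
    then have "reach_prob p A U = 0"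
      by (simp add: reach_prob_def reachable_from_def bernoulli_prob_def)
    then show ?thesis using assms by (simp add: power_le_one)
  next
    case 3
    define m where "m = card A + card U - 1"
    define c where "c = 1 - (1 - p) ^ (m - 1)"
    have "0 < card A" "0 < card U"
      using 3 less.prems by (auto simp: card_gt_0_iff)
    then have m: "m = Suc (m - 1)"
      by (simp add: m_def)
    have "reach_prob p A U \<le>
        (\<Sum>K\<in>Pow U. bernoulli_weight p U K * reach_prob p (A - {w} \<union> K) (U - K))"
      using reach_prob_remove_root[OF assms less.prems 3(1)] .
    also have "\<dots> \<le> (\<Sum>K\<in>Pow U. bernoulli_weight p U K * c ^ card (U - K))"
    proof (intro sum_mono mult_left_mono bernoulli_weight_nonneg assms)
      fix K assume K: "K \<in> Pow U"
      then have "finite K" "card K \<le> card U"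
        using less.prems finite_subset card_mono by auto
      moreover have "card (A - {w} \<union> K) = card A - 1 + card K"
        using K 3 less.prems \<open>finite K\<close> by (subst card_Un_disjoint) auto
      moreover have "card (U - K) = card U - card K"
        using K \<open>finite K\<close> by (simp add: card_Diff_subset)
      ultimately have card: "card (A - {w} \<union> K) + card (U - K) = m"
        using \<open>0 < card A\<close> by (simp add: m_def)
      have "reach_prob p (A - {w} \<union> K) (U - K) \<le>
          (1 - (1 - p) ^ (card (A - {w} \<union> K) + card (U - K) - 1)) ^ card (U - K)"
        using less.prems \<open>finite K\<close> card m
        by (intro less.hyps) (auto simp: m_def)
      then show "reach_prob p (A - {w} \<union> K) (U - K) \<le> c ^ card (U - K)"
        unfolding card c_def .
    qed
    also have "\<dots> = (p + (1 - p) * c) ^ card U"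
      using less.prems by (simp add: sum_bernoulli_weight_power)
    also have "p + (1 - p) * c = 1 - (1 - p) ^ m"
      by (subst m(1)) (simp add: c_def algebra_simps)
    finally show ?thesis unfolding m_def .
  qed
qed

lemma gnp_pairs_eq_pairs_meeting: "gnp_pairs n = pairs_meeting {1} {2..n}"
  unfolding gnp_pairs_def pairs_meeting_def
proof (intro set_eqI iffI; elim CollectE exE conjE)
  fix e i j assume e: "e = {i, j}" "i \<in> {1..n}" "j \<in> {1..n}" "i \<noteq> j"
  show "e \<in> {{x, y} | x y. x \<noteq> y \<and> x \<in> {1} \<union> {2..n} \<and> y \<in> {2..n}}"
  proof (cases "j = 1")
    case True
    with e have "e = {j, i} \<and> j \<noteq> i \<and> j \<in> {1} \<union> {2..n} \<and> i \<in> {2..n}" by auto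
    then show ?thesis by blast
  next
    case False
    with e have "e = {i, j} \<and> i \<noteq> j \<and> i \<in> {1} \<union> {2..n} \<and> j \<in> {2..n}" by auto
    then show ?thesis by blast
  qed
next
  fix e x y assume "e = {x, y}" "x \<noteq> y" "x \<in> {1} \<union> {2..n}" "y \<in> {2..n}"
  then show "e \<in> {e. \<exists>i j. e = {i, j} \<and> i \<in> {1..n} \<and> j \<in> {1..n} \<and> i \<noteq> j}"
    by (intro CollectI exI[of _ x] exI[of _ y]) auto
qed

lemma gnp_prob_eq_bernoulli_prob: "gnp_prob n p Q = bernoulli_prob p (gnp_pairs n) Q"
proof -
  have "finite (gnp_pairs n)"
    by (simp add: gnp_pairs_eq_pairs_meeting finite_pairs_meeting)
  then have "card (gnp_pairs n - E) = card (gnp_pairs n) - card E" if "E \<subseteq> gnp_pairs n" for E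
    using that by (simp add: card_Diff_subset finite_subset)
  then show ?thesis
    unfolding gnp_prob_def bernoulli_prob_def bernoulli_weight_def by (intro sum.cong) auto
qed

lemma graph_connected_imp_reachable_from:
  "1 \<le> n \<Longrightarrow> graph_connected n E \<Longrightarrow> reachable_from E {1} {2..n}"
  unfolding graph_connected_def reachable_from_def by auto

theorem lemma3p3:
  fixes \<alpha> :: real and n :: nat
  assumes "\<alpha> \<ge> 0" and "n \<ge> 2" and "real n \<ge> \<alpha>"
  shows "gnp_prob n (\<alpha> / real n) (graph_connected n)
           \<le> (1 - (1 - \<alpha> / real n) ^ (n - 1)) ^ (n - 1)"
proof -
  define p where "p = \<alpha> / real n"
  have p: "0 \<le> p" "p \<le> 1"
    unfolding p_def using assms by (simp_all add: divide_le_eq_1)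
  have "gnp_prob n p (graph_connected n) =
      bernoulli_prob p (pairs_meeting {1} {2..n}) (graph_connected n)"
    by (simp add: gnp_prob_eq_bernoulli_prob gnp_pairs_eq_pairs_meeting)
  also have "\<dots> \<le> reach_prob p {1} {2..n}"
    unfolding reach_prob_def using assms(2) p
    by (intro bernoulli_prob_mono finite_pairs_meeting graph_connected_imp_reachable_from) auto
  also have "\<dots> \<le> (1 - (1 - p) ^ (card {1::nat} + card {2..n} - 1)) ^ card {2..n}"
    using p by (intro reach_prob_le) auto
  also have "\<dots> = (1 - (1 - p) ^ (n - 1)) ^ (n - 1)"
    using assms(2) by simp
  finally show ?thesis unfolding p_def .
qed

end
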